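(* Let $d\ge 1$ and $n>d+1$ be integers, and let $P$ be a simple $d$-polytope in $\mathbb{R}^d$ with exactly $n$ facets (that is, $P$ is not a simplex). Then there exist a $d$-polytope $Q\subset\mathbb{R}^d$ with exactly $n-1$ facets and a closed halfspace $H^+\subset\mathbb{R}^d$ such that $Q\cap H^+$ is combinatorially equivalent to $P$ (i.e. $Q\cap H^+$ and $P$ have isomorphic face lattices). In words: every combinatorial type of simple $(n,d)$-polytope other than the simplex arises as the intersection of some $(n-1,d)$-polytope with a halfspace.
   Context: A $d$-polytope is a bounded intersection of finitely many closed halfspaces in $\mathbb{R}^d$ with nonempty interior; an $(n,d)$-polytope is a $d$-polytope with exactly $n$ facets (equivalently, $n$ irredundant defining inequalities). A $d$-polytope is simple if every vertex lies in exactly $d$ facets. Two polytopes are combinatorially equivalent if their face lattices (faces ordered by inclusion) are isomorphic. *)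

theory Defs
  imports "HOL-Analysis.Analysis"
begin

text \<open>A d-polytope in the Euclidean space 'a (of dimension d = DIM('a)):
  a polytope with nonempty interior.\<close>
definition full_polytope :: "'a::euclidean_space set \<Rightarrow> bool" where
  "full_polytope P \<longleftrightarrow> polytope P \<and> interior P \<noteq> {}"

definition num_facets :: "'a::euclidean_space set \<Rightarrow> nat" where
  "num_facets P = card {F. F facet_of P}"

definition simple_polytope :: "'a::euclidean_space set \<Rightarrow> bool" where
  "simple_polytope P \<longleftrightarrow>
     (\<forall>v. v extreme_point_of P \<longrightarrow> card {F. F facet_of P \<and> v \<in> F} = DIM('a))"

definition comb_equiv :: "'a::euclidean_space set \<Rightarrow> 'a set \<Rightarrow> bool" where
  "comb_equiv P Q \<longleftrightarrow>
     (\<exists>f. bij_betw f {F. F face_of P} {G. G face_of Q} \<and>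
          (\<forall>F1 F2. F1 face_of P \<longrightarrow> F2 face_of P \<longrightarrow> (F1 \<subseteq> F2 \<longleftrightarrow> f F1 \<subseteq> f F2)))"

definition closed_halfspace :: "'a::euclidean_space set \<Rightarrow> bool" where
  "closed_halfspace H \<longleftrightarrow> (\<exists>a b. a \<noteq> 0 \<and> H = {x. inner a x \<le> b})"

end

theory Submission
  imports Defs
begin

text \<open>Move an interior point of P to the origin and write P = {y. \<forall>i. u i \<bullet> y \<le> 1}. Since P is
  bounded, the normals u i affinely span the space, and since there are at least d + 2 of them,
  one index F can be dropped so that a ball around some point c still lies in the convex hull of
  the remaining normals. The projective map z \<mapsto> z / (1 - c \<bullet> z) carries P onto
  {y. \<forall>i. (u i - c) \<bullet> y \<le> 1} and maps segments onto segments, hence faces onto faces.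
  Dropping the constraint F leaves Q, whose n - 1 constraints stay irredundant and which is
  bounded because its normals u i - c surround the origin; the dropped constraint is the
  halfspace H.\<close>

definition proj_map :: "'a::real_inner \<Rightarrow> 'a \<Rightarrow> 'a" where
  "proj_map c z = (1 / (1 - c \<bullet> z)) *\<^sub>R z"

lemma
  assumes "c \<bullet> z < 1"
  shows proj_map_inverse: "proj_map (-c) (proj_map c z) = z"
    and inner_neg_proj_map_less: "(-c) \<bullet> proj_map c z < 1"
proof -
  have pos: "1 - c \<bullet> z > 0" using assms by simp
  have inner: "c \<bullet> proj_map c z = (c \<bullet> z) / (1 - c \<bullet> z)" by (simp add: proj_map_def)
  have "1 - (-c) \<bullet> proj_map c z = 1 / (1 - c \<bullet> z)"
    using pos by (simp add: inner field_simps)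
  then show "proj_map (-c) (proj_map c z) = z"
    using pos by (simp add: proj_map_def[of "-c"]) (simp add: proj_map_def)
  show "(-c) \<bullet> proj_map c z < 1"
    using pos by (simp add: inner less_divide_eq)
qed

lemma
  assumes "c \<bullet> z < 1"
  shows inner_diff_proj_map_le_1_iff: "(v - c) \<bullet> proj_map c z \<le> 1 \<longleftrightarrow> v \<bullet> z \<le> 1"
    and inner_diff_proj_map_gt_1_iff: "1 < (v - c) \<bullet> proj_map c z \<longleftrightarrow> 1 < v \<bullet> z"
proof -
  have pos: "1 - c \<bullet> z > 0" using assms by simp
  have inner: "(v - c) \<bullet> proj_map c z = (v \<bullet> z - c \<bullet> z) / (1 - c \<bullet> z)"
    by (simp add: proj_map_def inner_diff_left)
  show "(v - c) \<bullet> proj_map c z \<le> 1 \<longleftrightarrow> v \<bullet> z \<le> 1"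
    unfolding inner using pos by (simp add: divide_le_eq)
  show "1 < (v - c) \<bullet> proj_map c z \<longleftrightarrow> 1 < v \<bullet> z"
    unfolding inner using pos by (simp add: less_divide_eq)
qed

lemma proj_map_closed_segment:
  assumes a: "c \<bullet> a < 1" and b: "c \<bullet> b < 1" and x: "x \<in> closed_segment a b"
  shows "proj_map c x \<in> closed_segment (proj_map c a) (proj_map c b)"
proof -
  obtain t where t: "0 \<le> t" "t \<le> 1" "x = (1 - t) *\<^sub>R a + t *\<^sub>R b"
    using x by (auto simp: in_segment)
  define \<alpha> where "\<alpha> = 1 - c \<bullet> a"
  define \<beta> where "\<beta> = 1 - c \<bullet> b"
  have \<alpha>\<beta>: "\<alpha> > 0" "\<beta> > 0" using a b by (auto simp: \<alpha>_def \<beta>_def)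
  define D where "D = (1 - t) * \<alpha> + t * \<beta>"
  have D: "D > 0" unfolding D_def using \<alpha>\<beta> t
    by (cases "t = 0") (auto intro: add_nonneg_pos add_pos_nonneg)
  have Dx: "1 - c \<bullet> x = D" unfolding D_def \<alpha>_def \<beta>_def t(3)
    by (simp add: inner_add_right algebra_simps)
  define s where "s = t * \<beta> / D"
  have s: "0 \<le> s" "s \<le> 1" unfolding s_def using D t \<alpha>\<beta>
    by (auto simp: field_simps D_def)
  have "1 - s = (1 - t) * \<alpha> / D" unfolding s_def using D by (simp add: field_simps D_def)
  then have "(1 - s) * (1 / \<alpha>) = (1 - t) / D" using \<alpha>\<beta> by simp
  moreover have "s * (1 / \<beta>) = t / D" unfolding s_def using \<alpha>\<beta> by simp
  ultimately have "(1 - s) *\<^sub>R proj_map c a + s *\<^sub>R proj_map c b = (1 / D) *\<^sub>R x"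
    unfolding proj_map_def \<alpha>_def[symmetric] \<beta>_def[symmetric] t(3)
    by (simp add: scaleR_add_right divide_inverse mult.commute)
  then have "proj_map c x = (1 - s) *\<^sub>R proj_map c a + s *\<^sub>R proj_map c b"
    unfolding proj_map_def Dx by simp
  then show ?thesis using s by (auto simp: in_segment)
qed

text \<open>Only \<psi> needs to preserve segments: it pulls segments of T back into S, where
  convexity of F and the face condition apply.\<close>
lemma face_of_image_segment_preserving:
  fixes S :: "'a::real_vector set" and T :: "'b::real_vector set"
  assumes "convex T"
    and \<phi>: "\<And>x. x \<in> S \<Longrightarrow> \<phi> x \<in> T" and \<psi>: "\<And>y. y \<in> T \<Longrightarrow> \<psi> y \<in> S"
    and \<psi>\<phi>: "\<And>x. x \<in> S \<Longrightarrow> \<psi> (\<phi> x) = x" and \<phi>\<psi>: "\<And>y. y \<in> T \<Longrightarrow> \<phi> (\<psi> y) = y"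
    and segment: "\<And>a b y. a \<in> T \<Longrightarrow> b \<in> T \<Longrightarrow> y \<in> closed_segment a b \<Longrightarrow>
                   \<psi> y \<in> closed_segment (\<psi> a) (\<psi> b)"
    and F: "F face_of S"
  shows "\<phi> ` F face_of T"
  unfolding face_of_def
proof (intro conjI ballI impI)
  have FS: "F \<subseteq> S" and "convex F" using F face_of_imp_subset face_of_imp_convex by auto
  show "\<phi> ` F \<subseteq> T" using FS \<phi> by auto
  show "convex (\<phi> ` F)" unfolding convex_contains_segment
  proof (intro ballI subsetI)
    fix a' b' z assume "a' \<in> \<phi> ` F" "b' \<in> \<phi> ` F" and z: "z \<in> closed_segment a' b'"
    then obtain a b where ab: "a \<in> F" "b \<in> F" "a' = \<phi> a" "b' = \<phi> b" by auto
    have "a' \<in> T" "b' \<in> T" using ab FS \<phi> by auto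
    then have "z \<in> T" using closed_segment_subset[OF _ _ \<open>convex T\<close>] z by auto
    have "\<psi> a' = a" "\<psi> b' = b" using ab FS \<psi>\<phi> by auto
    then have "\<psi> z \<in> closed_segment a b"
      using segment[OF \<open>a' \<in> T\<close> \<open>b' \<in> T\<close> z] by simp
    then have "\<psi> z \<in> F" using closed_segment_subset[OF ab(1,2) \<open>convex F\<close>] by auto
    then show "z \<in> \<phi> ` F" using \<phi>\<psi>[OF \<open>z \<in> T\<close>] by (metis image_eqI)
  qed
  fix a' b' x'
  assume a': "a' \<in> T" and b': "b' \<in> T" and "x' \<in> \<phi> ` F" and x': "x' \<in> open_segment a' b'"
  then obtain x where x: "x \<in> F" "x' = \<phi> x" by auto
  have "x' \<in> T" using x FS \<phi> by auto
  have "\<psi> x' \<noteq> \<psi> a'" "\<psi> x' \<noteq> \<psi> b'"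
    using x' \<phi>\<psi>[OF \<open>x' \<in> T\<close>] \<phi>\<psi>[OF a'] \<phi>\<psi>[OF b'] by (metis open_segment_def DiffD2 insertCI)+
  moreover have "\<psi> x' = x" using x FS \<psi>\<phi> by auto
  ultimately have "x \<in> open_segment (\<psi> a') (\<psi> b')"
    using segment[OF a' b'] x' by (auto simp: open_segment_def)
  then have "\<psi> a' \<in> F \<and> \<psi> b' \<in> F" using face_ofD[OF F _ \<psi>[OF a'] \<psi>[OF b'] x(1)] by blast
  then show "a' \<in> \<phi> ` F" "b' \<in> \<phi> ` F" using \<phi>\<psi> a' b' by (metis image_eqI)+
qed

lemma comb_equiv_segment_preserving:
  fixes S T :: "'a::euclidean_space set"
  assumes "convex S" "convex T"
    and \<phi>: "\<And>x. x \<in> S \<Longrightarrow> \<phi> x \<in> T" and \<psi>: "\<And>y. y \<in> T \<Longrightarrow> \<psi> y \<in> S"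
    and \<psi>\<phi>: "\<And>x. x \<in> S \<Longrightarrow> \<psi> (\<phi> x) = x" and \<phi>\<psi>: "\<And>y. y \<in> T \<Longrightarrow> \<phi> (\<psi> y) = y"
    and segment_\<phi>: "\<And>a b y. a \<in> S \<Longrightarrow> b \<in> S \<Longrightarrow> y \<in> closed_segment a b \<Longrightarrow>
                   \<phi> y \<in> closed_segment (\<phi> a) (\<phi> b)"
    and segment_\<psi>: "\<And>a b y. a \<in> T \<Longrightarrow> b \<in> T \<Longrightarrow> y \<in> closed_segment a b \<Longrightarrow>
                   \<psi> y \<in> closed_segment (\<psi> a) (\<psi> b)"
  shows "comb_equiv T S"
proof -
  have \<psi>_face: "\<psi> ` G face_of S" if "G face_of T" for G
    by (rule face_of_image_segment_preserving[OF \<open>convex S\<close> \<psi> \<phi> \<phi>\<psi> \<psi>\<phi> segment_\<phi> that])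
  have \<phi>_face: "\<phi> ` F face_of T" if "F face_of S" for F
    by (rule face_of_image_segment_preserving[OF \<open>convex T\<close> \<phi> \<psi> \<psi>\<phi> \<phi>\<psi> segment_\<psi> that])
  have \<phi>\<psi>_image: "\<phi> ` \<psi> ` G = G" if "G \<subseteq> T" for G
    using that \<phi>\<psi> by (force simp: image_image)
  have \<psi>\<phi>_image: "\<psi> ` \<phi> ` F = F" if "F \<subseteq> S" for F
    using that \<psi>\<phi> by (force simp: image_image)
  show ?thesis unfolding comb_equiv_def
  proof (intro exI conjI allI impI)
    show "bij_betw ((`) \<psi>) {F. F face_of T} {G. G face_of S}"
      by (rule bij_betw_byWitness[where f'="(`) \<phi>"])
         (auto simp: \<psi>_face \<phi>_face \<phi>\<psi>_image \<psi>\<phi>_image face_of_imp_subset)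
    fix G1 G2 assume "G1 face_of T" "G2 face_of T"
    then show "G1 \<subseteq> G2 \<longleftrightarrow> \<psi> ` G1 \<subseteq> \<psi> ` G2"
      by (metis \<phi>\<psi>_image face_of_imp_subset image_mono)
  qed
qed

lemma comb_equiv_trans:
  assumes "comb_equiv S T" "comb_equiv T U"
  shows "comb_equiv S U"
proof -
  obtain f where f: "bij_betw f {F. F face_of S} {G. G face_of T}"
    and f_mono: "\<And>F1 F2. F1 face_of S \<Longrightarrow> F2 face_of S \<Longrightarrow> F1 \<subseteq> F2 \<longleftrightarrow> f F1 \<subseteq> f F2"
    using assms(1) unfolding comb_equiv_def by blast
  obtain g where g: "bij_betw g {G. G face_of T} {G. G face_of U}"
    and g_mono: "\<And>G1 G2. G1 face_of T \<Longrightarrow> G2 face_of T \<Longrightarrow> G1 \<subseteq> G2 \<longleftrightarrow> g G1 \<subseteq> g G2"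
    using assms(2) unfolding comb_equiv_def by blast
  have "f F face_of T" if "F face_of S" for F using bij_betwE[OF f] that by blast
  then show ?thesis unfolding comb_equiv_def
    by (intro exI[of _ "g \<circ> f"] conjI bij_betw_trans[OF f g] allI impI) (simp add: f_mono g_mono)
qed

lemma comb_equiv_translation:
  fixes S :: "'a::euclidean_space set"
  shows "comb_equiv S ((+) p ` S)"
  unfolding comb_equiv_def
proof (intro exI conjI allI impI)
  show "bij_betw ((`) ((+) p)) {F. F face_of S} {G. G face_of (+) p ` S}"
  proof (rule bij_betw_byWitness[where f'="(`) ((+) (- p))"])
    show "(`) ((+) p) ` {F. F face_of S} \<subseteq> {G. G face_of (+) p ` S}" by auto
    show "(`) ((+) (- p)) ` {G. G face_of (+) p ` S} \<subseteq> {F. F face_of S}"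
      using face_of_translation_eq[of "- p" _ "(+) p ` S"] by (auto simp: image_image)
  qed (auto simp: image_image)
  fix F1 F2 :: "'a set"
  show "F1 \<subseteq> F2 \<longleftrightarrow> (+) p ` F1 \<subseteq> (+) p ` F2" by (auto simp: inj_image_subset_iff)
qed

definition halfspace_Inter :: "('i \<Rightarrow> 'a::real_inner) \<Rightarrow> ('i \<Rightarrow> real) \<Rightarrow> 'i set \<Rightarrow> 'a set" where
  "halfspace_Inter a b I = {x. \<forall>i\<in>I. a i \<bullet> x \<le> b i}"

definition irredundant_system :: "('i \<Rightarrow> 'a::real_inner) \<Rightarrow> ('i \<Rightarrow> real) \<Rightarrow> 'i set \<Rightarrow> bool" where
  "irredundant_system a b I \<longleftrightarrow> (\<forall>i\<in>I. \<exists>z. b i < a i \<bullet> z \<and> z \<in> halfspace_Inter a b (I - {i}))"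

lemma polyhedron_halfspace_Inter:
  fixes a :: "'i \<Rightarrow> 'a::euclidean_space"
  assumes "finite I"
  shows "polyhedron (halfspace_Inter a b I)"
proof -
  have "halfspace_Inter a b I = \<Inter>((\<lambda>i. {x. a i \<bullet> x \<le> b i}) ` I)"
    by (auto simp: halfspace_Inter_def)
  then show ?thesis using assms by (auto intro: polyhedron_halfspace_le)
qed

lemma interior_halfspace_Inter:
  fixes a :: "'i \<Rightarrow> 'a::euclidean_space"
  assumes "finite I" and "\<forall>i\<in>I. a i \<bullet> p < b i"
  shows "p \<in> interior (halfspace_Inter a b I)"
proof (rule interior_maximal[where T="\<Inter>i\<in>I. {x. a i \<bullet> x < b i}", THEN subsetD])
  show "open (\<Inter>i\<in>I. {x. a i \<bullet> x < b i})"
    using assms(1) by (intro open_INT) (auto intro: open_halfspace_lt)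
qed (use assms(2) in \<open>auto simp: halfspace_Inter_def less_imp_le\<close>)

text \<open>The point is found on the segment from the strictly feasible p to a point violating
  only the constraint i.\<close>
lemma irredundant_system_obtains_relative_interior_point:
  fixes a :: "'i \<Rightarrow> 'a::euclidean_space"
  assumes p: "\<forall>k\<in>I. a k \<bullet> p < b k" and "irredundant_system a b I" and "i \<in> I"
  obtains q where "q \<in> halfspace_Inter a b I" "a i \<bullet> q = b i" "\<forall>k\<in>I - {i}. a k \<bullet> q < b k"
proof -
  obtain z where z: "b i < a i \<bullet> z" "\<forall>k\<in>I - {i}. a k \<bullet> z \<le> b k"
    using assms(2,3) by (auto simp: irredundant_system_def halfspace_Inter_def)
  have pi: "a i \<bullet> p < b i" using p \<open>i \<in> I\<close> by auto
  define t where "t = (b i - a i \<bullet> p) / (a i \<bullet> z - a i \<bullet> p)"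
  have t: "0 < t" "t < 1" using pi z(1) by (auto simp: t_def field_simps)
  define q where "q = p + t *\<^sub>R (z - p)"
  have aq: "a k \<bullet> q = (1 - t) * (a k \<bullet> p) + t * (a k \<bullet> z)" for k
    by (simp add: q_def inner_add_right inner_diff_right algebra_simps)
  have "t * (a i \<bullet> z - a i \<bullet> p) = b i - a i \<bullet> p" unfolding t_def using pi z(1) by simp
  then have qi: "a i \<bullet> q = b i" unfolding aq by (simp add: algebra_simps)
  have qk: "a k \<bullet> q < b k" if "k \<in> I - {i}" for k
  proof -
    have "(1 - t) * (a k \<bullet> p) < (1 - t) * b k" "t * (a k \<bullet> z) \<le> t * b k"
      using p z that t by (auto intro: mult_strict_left_mono mult_left_mono)
    then show ?thesis unfolding aq by (simp add: algebra_simps)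
  qed
  have "q \<in> halfspace_Inter a b I" using qi qk by (force simp: halfspace_Inter_def)
  then show ?thesis using that qi qk by blast
qed

lemma facets_halfspace_Inter:
  fixes a :: "'i \<Rightarrow> 'a::euclidean_space"
  assumes "finite I" and p: "\<forall>i\<in>I. a i \<bullet> p < b i" and irr: "irredundant_system a b I"
  defines "S \<equiv> halfspace_Inter a b I"
  shows "{G. G facet_of S} = (\<lambda>i. S \<inter> {x. a i \<bullet> x = b i}) ` I"
proof -
  have "affine hull S = UNIV"
    using interior_halfspace_Inter[OF assms(1,2)] affine_hull_nonempty_interior S_def by blast
  define hs where "hs i = {x. a i \<bullet> x \<le> b i}" for i
  have violator: "\<exists>z. z \<notin> hs i \<and> (\<forall>j\<in>I - {i}. z \<in> hs j)" if "i \<in> I" for i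
    using irr that by (force simp: irredundant_system_def halfspace_Inter_def hs_def)
  have "inj_on hs I"
    by (rule inj_onI) (use violator in blast)
  define a' where "a' h = a (inv_into I hs h)" for h
  define b' where "b' h = b (inv_into I hs h)" for h
  have ab': "a' (hs i) = a i" "b' (hs i) = b i" if "i \<in> I" for i
    using \<open>inj_on hs I\<close> that by (auto simp: a'_def b'_def)
  have "S = affine hull S \<inter> \<Inter>(hs ` I)"
    using \<open>affine hull S = UNIV\<close> by (auto simp: S_def halfspace_Inter_def hs_def)
  moreover have "a' h \<noteq> 0 \<and> h = {x. a' h \<bullet> x \<le> b' h}" if h: "h \<in> hs ` I" for h
  proof -
    obtain i where "i \<in> I" "h = hs i" using h by blast
    moreover have "a i \<noteq> 0" using violator[OF \<open>i \<in> I\<close>] p \<open>i \<in> I\<close> by (force simp: hs_def)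
    ultimately show ?thesis using ab' by (simp add: hs_def)
  qed
  moreover have "S \<subset> affine hull S \<inter> \<Inter>J" if J: "J \<subset> hs ` I" for J
  proof -
    obtain i where "i \<in> I" "hs i \<notin> J" using J by blast
    then obtain z where "z \<notin> hs i" "\<forall>j\<in>I - {i}. z \<in> hs j" using violator by blast
    then have "z \<in> \<Inter>J - S" using J \<open>i \<in> I\<close> \<open>hs i \<notin> J\<close>
      by (auto simp: S_def halfspace_Inter_def hs_def)
    moreover have "S \<subseteq> \<Inter>J" using J by (auto simp: S_def halfspace_Inter_def hs_def)
    ultimately show ?thesis using \<open>affine hull S = UNIV\<close> by blast
  qed
  ultimately have "G facet_of S \<longleftrightarrow> (\<exists>h\<in>hs ` I. G = S \<inter> {x. a' h \<bullet> x = b' h})" for G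
    using facet_of_polyhedron_explicit[of "hs ` I" S a' b' G] \<open>finite I\<close> by blast
  then show ?thesis using ab' by auto
qed

lemma card_facets_halfspace_Inter:
  fixes a :: "'i \<Rightarrow> 'a::euclidean_space"
  assumes "finite I" and p: "\<forall>i\<in>I. a i \<bullet> p < b i" and irr: "irredundant_system a b I"
  shows "num_facets (halfspace_Inter a b I) = card I"
proof -
  let ?S = "halfspace_Inter a b I"
  have "inj_on (\<lambda>i. ?S \<inter> {x. a i \<bullet> x = b i}) I"
  proof (rule inj_onI, rule ccontr)
    fix i j assume "i \<in> I" "j \<in> I" "i \<noteq> j"
      and eq: "?S \<inter> {x. a i \<bullet> x = b i} = ?S \<inter> {x. a j \<bullet> x = b j}"
    obtain q where "q \<in> ?S" "a i \<bullet> q = b i" "\<forall>k\<in>I - {i}. a k \<bullet> q < b k"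
      using irredundant_system_obtains_relative_interior_point[OF p irr \<open>i \<in> I\<close>] .
    then have "a j \<bullet> q = b j" "a j \<bullet> q < b j" using eq \<open>j \<in> I\<close> \<open>i \<noteq> j\<close> by blast+
    then show False by simp
  qed
  then show ?thesis
    unfolding num_facets_def facets_halfspace_Inter[OF assms] by (rule card_image)
qed

lemma full_polytope_halfspace_Inter:
  fixes P :: "'a::euclidean_space set"
  assumes "full_polytope P"
  obtains a b and I :: "'a set set" and p
  where "finite I" "P = halfspace_Inter a b I" "irredundant_system a b I" "\<forall>i\<in>I. a i \<bullet> p < b i"
proof -
  have "polytope P" and "interior P \<noteq> {}" using assms by (auto simp: full_polytope_def)
  then obtain p where p: "p \<in> interior P" by blast
  have aff: "affine hull P = UNIV" using p affine_hull_nonempty_interior by blast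
  obtain I where "finite I" and P_Inter: "P = affine hull P \<inter> \<Inter>I"
    and halfspaces: "\<forall>h\<in>I. \<exists>a b. a \<noteq> 0 \<and> h = {x. a \<bullet> x \<le> b}"
    and minimal: "\<forall>J. J \<subset> I \<longrightarrow> P \<subset> affine hull P \<inter> \<Inter>J"
    using polytope_imp_polyhedron[OF \<open>polytope P\<close>] by (simp add: polyhedron_Int_affine_minimal) meson
  obtain a b where ab: "\<forall>h\<in>I. a h \<noteq> 0 \<and> h = {x. a h \<bullet> x \<le> b h}"
    using halfspaces by metis
  have mem_I: "x \<in> h \<longleftrightarrow> a h \<bullet> x \<le> b h" if "h \<in> I" for h x
    using ab that by blast
  have P_eq: "P = halfspace_Inter a b I"
    using P_Inter aff mem_I by (auto simp: halfspace_Inter_def)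
  have strict: "\<forall>h\<in>I. a h \<bullet> p < b h"
  proof
    fix h assume "h \<in> I"
    then have "interior P \<subseteq> interior {x. a h \<bullet> x \<le> b h}"
      using P_eq by (intro interior_mono) (auto simp: halfspace_Inter_def)
    then show "a h \<bullet> p < b h" using p ab \<open>h \<in> I\<close> interior_halfspace_le by blast
  qed
  have "irredundant_system a b I" unfolding irredundant_system_def
  proof
    fix h assume "h \<in> I"
    then have "P \<subset> \<Inter>(I - {h})" using minimal aff by blast
    then obtain z where z: "z \<in> \<Inter>(I - {h})" "z \<notin> P" by blast
    then have "z \<notin> h" using P_Inter aff by auto
    then show "\<exists>z. b h < a h \<bullet> z \<and> z \<in> halfspace_Inter a b (I - {h})"
      using z(1) mem_I \<open>h \<in> I\<close> by (auto simp: halfspace_Inter_def not_le)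
  qed
  then show thesis using that \<open>finite I\<close> P_eq strict by blast
qed

text \<open>Rescaling each constraint by its slack at p turns b i into 1 once p is the origin.\<close>
lemma halfspace_Inter_centred:
  fixes a :: "'i \<Rightarrow> 'a::real_inner"
  assumes p: "\<forall>i\<in>I. a i \<bullet> p < b i"
  defines "u \<equiv> \<lambda>i. (1 / (b i - a i \<bullet> p)) *\<^sub>R a i"
  shows "halfspace_Inter a b I = (+) p ` halfspace_Inter u (\<lambda>_. 1) I"
    and "irredundant_system a b I \<Longrightarrow> irredundant_system u (\<lambda>_. 1) I"
proof -
  have inner_u: "u i \<bullet> (x - p) = (a i \<bullet> x - a i \<bullet> p) / (b i - a i \<bullet> p)" for i x
    by (simp add: u_def inner_diff_right diff_divide_distrib)
  have le: "u i \<bullet> (x - p) \<le> 1 \<longleftrightarrow> a i \<bullet> x \<le> b i"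
    and gt: "1 < u i \<bullet> (x - p) \<longleftrightarrow> b i < a i \<bullet> x" if "i \<in> I" for i x
    using p that by (simp_all add: inner_u divide_le_eq less_divide_eq)
  have mem: "x \<in> halfspace_Inter a b J \<longleftrightarrow> x - p \<in> halfspace_Inter u (\<lambda>_. 1) J"
    if "J \<subseteq> I" for J x
    using le that by (auto simp: halfspace_Inter_def)
  have "(+) p ` halfspace_Inter u (\<lambda>_. 1) I = {x. x - p \<in> halfspace_Inter u (\<lambda>_. 1) I}"
    by (force simp: algebra_simps)
  then show "halfspace_Inter a b I = (+) p ` halfspace_Inter u (\<lambda>_. 1) I"
    using mem[of I] by auto
  show "irredundant_system u (\<lambda>_. 1) I" if irr: "irredundant_system a b I"
    unfolding irredundant_system_def
  proof
    fix i assume "i \<in> I"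
    then obtain z where "b i < a i \<bullet> z" "z \<in> halfspace_Inter a b (I - {i})"
      using irr by (auto simp: irredundant_system_def)
    then show "\<exists>z. 1 < u i \<bullet> z \<and> z \<in> halfspace_Inter u (\<lambda>_. 1) (I - {i})"
      using gt[OF \<open>i \<in> I\<close>] mem[of "I - {i}"] by blast
  qed
qed

lemma full_polytope_centred_form:
  fixes P :: "'a::euclidean_space set"
  assumes "full_polytope P"
  obtains p u and I :: "'a set set"
  where "finite I" "card I = num_facets P" "P = (+) p ` halfspace_Inter u (\<lambda>_. 1) I"
    "irredundant_system u (\<lambda>_. 1) I" "bounded (halfspace_Inter u (\<lambda>_. 1) I)"
proof -
  obtain a b and I :: "'a set set" and p where "finite I" and P: "P = halfspace_Inter a b I"
    and irr: "irredundant_system a b I" and p: "\<forall>i\<in>I. a i \<bullet> p < b i"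
    using full_polytope_halfspace_Inter[OF assms] .
  define u where "u = (\<lambda>i. (1 / (b i - a i \<bullet> p)) *\<^sub>R a i)"
  have P_centred: "P = (+) p ` halfspace_Inter u (\<lambda>_. 1) I"
    using halfspace_Inter_centred(1)[OF p] P by (simp add: u_def)
  have "bounded ((+) (- p) ` P)"
    using assms bounded_translation[of P "- p"] polytope_imp_bounded
    by (auto simp: full_polytope_def)
  then have "bounded (halfspace_Inter u (\<lambda>_. 1) I)"
    by (simp add: P_centred image_image)
  moreover have "card I = num_facets P"
    using card_facets_halfspace_Inter[OF \<open>finite I\<close> p irr] P by simp
  ultimately show thesis
    using that \<open>finite I\<close> P_centred halfspace_Inter_centred(2)[OF p irr] by (simp add: u_def)
qed

lemma ray_in_bounded_imp_zero:
  fixes y :: "'a::real_normed_vector"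
  assumes "bounded S" and ray: "\<And>t. 0 \<le> t \<Longrightarrow> t *\<^sub>R y \<in> S"
  shows "y = 0"
proof (rule ccontr)
  assume "y \<noteq> 0"
  obtain B where B: "\<forall>x\<in>S. norm x \<le> B" using assms(1) bounded_iff by blast
  define t where "t = (\<bar>B\<bar> + 1) / norm y"
  have "norm (t *\<^sub>R y) = \<bar>B\<bar> + 1" using \<open>y \<noteq> 0\<close> by (simp add: t_def)
  moreover have "0 \<le> t" by (simp add: t_def)
  then have "norm (t *\<^sub>R y) \<le> B" using B ray by blast
  ultimately show False by linarith
qed

text \<open>Otherwise the normals lie in a hyperplane w \<bullet> x = k, and the ray spanned by
  -sgn k \<cdot> w stays inside the polytope.\<close>
lemma aff_dim_normals_of_bounded:
  fixes u :: "'i \<Rightarrow> 'a::euclidean_space"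
  assumes bounded: "bounded (halfspace_Inter u (\<lambda>_. 1) I)"
  shows "aff_dim (u ` I) = DIM('a)"
proof (rule ccontr)
  assume "aff_dim (u ` I) \<noteq> DIM('a)"
  then have "aff_dim (u ` I) < DIM('a)" using aff_dim_le_DIM[of "u ` I"] by linarith
  then obtain w k where "w \<noteq> 0" and hyperplane: "u ` I \<subseteq> {x. w \<bullet> x = k}"
    by (rule aff_lowdim_subset_hyperplane)
  define s where "s = (if k \<le> 0 then w else - w)"
  have "u i \<bullet> s = - \<bar>k\<bar>" if "i \<in> I" for i
    using hyperplane that by (auto simp: s_def inner_commute)
  then have "t *\<^sub>R s \<in> halfspace_Inter u (\<lambda>_. 1) I" if "0 \<le> t" for t
    using that by (simp add: halfspace_Inter_def) (smt (verit) mult_nonneg_nonneg abs_ge_zero)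
  then have "s = 0" by (rule ray_in_bounded_imp_zero[OF bounded])
  then show False using \<open>w \<noteq> 0\<close> by (simp add: s_def split: if_splits)
qed

text \<open>An affine basis of u ` I has only DIM('a) + 1 elements, so some index F is not
  needed for it, and the interior of its convex hull is nonempty.\<close>
lemma obtain_ball_in_hull_without_one:
  fixes u :: "'i \<Rightarrow> 'a::euclidean_space"
  assumes "bounded (halfspace_Inter u (\<lambda>_. 1) I)" and "DIM('a) + 2 \<le> card I"
  obtains F c e where "F \<in> I" "0 < e" "ball c e \<subseteq> convex hull (u ` (I - {F}))"
proof -
  obtain B where B: "B \<subseteq> u ` I" "\<not> affine_dependent B" "affine hull (u ` I) = affine hull B"
    using affine_basis_exists by blast
  have "aff_dim B = DIM('a)"
    using aff_dim_normals_of_bounded[OF assms(1)] B(3) by (metis aff_dim_affine_hull)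
  then have card_B: "card B = Suc DIM('a)" using aff_dim_affine_independent[OF B(2)] by linarith
  then obtain c where c: "c \<in> interior (convex hull B)"
    using interior_convex_hull_eq_empty[OF card_B] B(2) by blast
  obtain e where e: "0 < e" "ball c e \<subseteq> interior (convex hull B)"
    using open_contains_ball open_interior c by blast
  obtain J where J: "J \<subseteq> I" "inj_on u J" "B = u ` J" using B(1) subset_image_inj by metis
  then have "card J = Suc DIM('a)" using card_B card_image by metis
  then have "finite J" "card J < card I" using assms(2) card.infinite by fastforce+
  then have "\<not> I \<subseteq> J" by (meson card_mono not_le)
  then obtain F where F: "F \<in> I" "F \<notin> J" by blast
  have "convex hull B \<subseteq> convex hull (u ` (I - {F}))" using J F by (intro hull_mono) auto
  then show thesis using that F e interior_subset by blast
qed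

text \<open>Test the inequality at the point of the ball in direction y.\<close>
lemma inner_bound_of_ball_in_hull:
  fixes u :: "'i \<Rightarrow> 'a::euclidean_space"
  assumes e: "0 < e" and ball: "ball c e \<subseteq> convex hull (u ` J)"
    and bound: "\<forall>j\<in>J. (u j - c) \<bullet> y \<le> r"
  shows "e / 2 * norm y \<le> r"
proof -
  have "convex hull (u ` J) \<subseteq> {v. y \<bullet> v \<le> r + c \<bullet> y}"
    using bound by (intro hull_minimal convex_halfspace_le)
      (auto simp: inner_diff_left inner_commute algebra_simps)
  then have ball_bound: "(v - c) \<bullet> y \<le> r" if "v \<in> ball c e" for v
    using ball that by (auto simp: inner_diff_left inner_commute algebra_simps)
  show ?thesis
  proof (cases "y = 0")
    case True
    then show ?thesis using ball_bound[of c] e by simp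
  next
    case False
    define v where "v = c + (e / 2 / norm y) *\<^sub>R y"
    have "v \<in> ball c e" using False e by (simp add: v_def dist_norm)
    moreover have "(v - c) \<bullet> y = e / 2 * norm y" using False
      by (simp add: v_def dot_square_norm power2_eq_square)
    ultimately show ?thesis using ball_bound by fastforce
  qed
qed

lemma obtain_scale_separating:
  fixes \<alpha> \<gamma> :: real
  assumes "1 < \<alpha>" "\<gamma> < \<alpha>"
  obtains s where "0 < s" "s \<le> 1" "1 < s * \<alpha>" "s * \<gamma> < 1"
proof
  let ?s = "if \<gamma> < 1 then 1 else 2 / (\<alpha> + \<gamma>)"
  show "0 < ?s" "?s \<le> 1" "1 < ?s * \<alpha>" "?s * \<gamma> < 1"
    using assms by (auto simp: field_simps)
qed

lemma scaleR_mem_unit_halfspace_Inter: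
  assumes "z \<in> halfspace_Inter u (\<lambda>_. 1) J" "0 \<le> s" "s \<le> 1"
  shows "s *\<^sub>R z \<in> halfspace_Inter u (\<lambda>_. 1) J"
proof -
  have "s * (u j \<bullet> z) \<le> 1" if "j \<in> J" for j
    using assms that mult_left_mono[of "u j \<bullet> z" 1 s] by (auto simp: halfspace_Inter_def)
  then show ?thesis by (simp add: halfspace_Inter_def)
qed

locale polar_cut =
  fixes u :: "'i \<Rightarrow> 'a::euclidean_space" and I :: "'i set" and F :: 'i and c :: 'a and e :: real
  assumes finite_I: "finite I"
    and bounded_K: "bounded (halfspace_Inter u (\<lambda>_. 1) I)"
    and irredundant_K: "irredundant_system u (\<lambda>_. 1) I"
    and F: "F \<in> I" and e: "0 < e"
    and ball_in_hull: "ball c e \<subseteq> convex hull (u ` (I - {F}))"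
begin

abbreviation "K \<equiv> halfspace_Inter u (\<lambda>_. 1) I"
abbreviation "w \<equiv> \<lambda>i. u i - c"
abbreviation "image_K \<equiv> halfspace_Inter w (\<lambda>_. 1) I"
abbreviation "cut_Q \<equiv> halfspace_Inter w (\<lambda>_. 1) (I - {F})"
abbreviation "cut_H \<equiv> {y. w F \<bullet> y \<le> 1}"

lemma inner_center_less:
  assumes "z \<in> K"
  shows "c \<bullet> z < 1"
proof (cases "z = 0")
  case False
  have "\<forall>i\<in>I - {F}. (u i - c) \<bullet> z \<le> 1 - c \<bullet> z"
    using assms by (auto simp: halfspace_Inter_def inner_diff_left)
  then have "e / 2 * norm z \<le> 1 - c \<bullet> z" by (rule inner_bound_of_ball_in_hull[OF e ball_in_hull])
  moreover have "0 < e / 2 * norm z" using False e by simp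
  ultimately show ?thesis by linarith
qed simp

lemma bounded_cut_Q: "bounded cut_Q"
proof -
  have "norm y \<le> 2 / e" if "y \<in> cut_Q" for y
  proof -
    have "e / 2 * norm y \<le> 1"
      using that by (intro inner_bound_of_ball_in_hull[OF e ball_in_hull]) (simp add: halfspace_Inter_def)
    then show ?thesis using e by (simp add: field_simps)
  qed
  then show ?thesis unfolding bounded_iff by blast
qed

lemma normal_F_nonzero: "w F \<noteq> 0"
proof
  assume "w F = 0"
  obtain z where z: "1 < u F \<bullet> z" "z \<in> halfspace_Inter u (\<lambda>_. 1) (I - {F})"
    using irredundant_K F unfolding irredundant_system_def by blast
  then have "\<forall>i\<in>I - {F}. (u i - c) \<bullet> z \<le> 1 - c \<bullet> z"
    by (auto simp: halfspace_Inter_def inner_diff_left)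
  then have "e / 2 * norm z \<le> 1 - c \<bullet> z" by (rule inner_bound_of_ball_in_hull[OF e ball_in_hull])
  moreover have "u F = c" using \<open>w F = 0\<close> by simp
  then have "1 - c \<bullet> z < 0" using z(1) by simp
  moreover have "0 \<le> e / 2 * norm z" using e by simp
  ultimately show False by linarith
qed

text \<open>Otherwise all u i \<bullet> y \<le> 1 + c \<bullet> y \<le> 0, and the ray through y would lie in K.\<close>
lemma inner_neg_center_less:
  assumes "y \<in> image_K"
  shows "(-c) \<bullet> y < 1"
proof (rule ccontr)
  assume "\<not> (-c) \<bullet> y < 1"
  then have "u i \<bullet> y \<le> 0" if "i \<in> I" for i
    using assms that by (auto simp: halfspace_Inter_def inner_diff_left)
  then have "t *\<^sub>R y \<in> K" if "0 \<le> t" for t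
    using that by (auto simp: halfspace_Inter_def mult_nonneg_nonpos intro: order_trans[OF _ zero_le_one])
  then have "y = 0" by (rule ray_in_bounded_imp_zero[OF bounded_K])
  then show False using \<open>\<not> (-c) \<bullet> y < 1\<close> by simp
qed

text \<open>A witness z for the irredundancy of constraint i in K is rescaled so that it still
  violates only constraint i but lies on the side c \<bullet> z < 1; its projective image is
  then a witness for Q.\<close>
lemma irredundant_cut_Q: "irredundant_system w (\<lambda>_. 1) (I - {F})"
  unfolding irredundant_system_def
proof
  fix i assume i: "i \<in> I - {F}"
  obtain z where z: "1 < u i \<bullet> z" "z \<in> halfspace_Inter u (\<lambda>_. 1) (I - {i})"
    using irredundant_K i by (auto simp: irredundant_system_def)
  define \<alpha> where "\<alpha> = u i \<bullet> z"
  have "(1 / \<alpha>) *\<^sub>R z \<in> K"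
    using scaleR_mem_unit_halfspace_Inter[OF z(2), of "1 / \<alpha>"] z(1) i
    by (auto simp: halfspace_Inter_def \<alpha>_def)
  then have "c \<bullet> ((1 / \<alpha>) *\<^sub>R z) < 1" by (rule inner_center_less)
  then have "c \<bullet> z / \<alpha> < 1" by simp
  then have "c \<bullet> z < \<alpha>" using z(1) by (simp add: \<alpha>_def divide_less_eq)
  then obtain s where s: "0 < s" "s \<le> 1" "1 < s * \<alpha>" "s * (c \<bullet> z) < 1"
    using obtain_scale_separating z(1) \<alpha>_def by metis
  define z' where "z' = s *\<^sub>R z"
  have "c \<bullet> z' < 1" "1 < u i \<bullet> z'" using s by (simp_all add: z'_def \<alpha>_def)
  moreover have "z' \<in> halfspace_Inter u (\<lambda>_. 1) (I - {i})"
    unfolding z'_def using scaleR_mem_unit_halfspace_Inter[OF z(2)] s by simp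
  ultimately have "1 < w i \<bullet> proj_map c z'"
    and "proj_map c z' \<in> halfspace_Inter w (\<lambda>_. 1) (I - {F} - {i})"
    by (auto simp: inner_diff_proj_map_gt_1_iff inner_diff_proj_map_le_1_iff halfspace_Inter_def)
  then show "\<exists>y. 1 < w i \<bullet> y \<and> y \<in> halfspace_Inter w (\<lambda>_. 1) (I - {F} - {i})" by blast
qed

lemma proj_map_mem_image_K:
  assumes "x \<in> K"
  shows "proj_map c x \<in> image_K"
  using assms inner_diff_proj_map_le_1_iff[OF inner_center_less[OF assms]]
  by (simp add: halfspace_Inter_def)

lemma proj_map_neg_mem_K:
  assumes "y \<in> image_K"
  shows "proj_map (-c) y \<in> K"
proof -
  have y: "(-c) \<bullet> y < 1" using inner_neg_center_less[OF assms] .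
  have "c \<bullet> proj_map (-c) y < 1" and "proj_map c (proj_map (-c) y) = y"
    using inner_neg_proj_map_less[OF y] proj_map_inverse[OF y] by simp_all
  then show ?thesis
    using assms inner_diff_proj_map_le_1_iff by (fastforce simp: halfspace_Inter_def)
qed

lemma comb_equiv_image_K: "comb_equiv image_K K"
proof (rule comb_equiv_segment_preserving[where \<phi>="proj_map c" and \<psi>="proj_map (-c)"])
  show "convex K" "convex image_K"
    using finite_I by (auto intro: polyhedron_imp_convex polyhedron_halfspace_Inter)
  show "proj_map (-c) (proj_map c x) = x" if "x \<in> K" for x
    using proj_map_inverse[OF inner_center_less[OF that]] .
  show "proj_map c (proj_map (-c) y) = y" if "y \<in> image_K" for y
    using proj_map_inverse[OF inner_neg_center_less[OF that]] by simp
  show "proj_map c y \<in> closed_segment (proj_map c a) (proj_map c b)"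
    if "a \<in> K" "b \<in> K" "y \<in> closed_segment a b" for a b y
    using proj_map_closed_segment inner_center_less that by blast
  show "proj_map (-c) y \<in> closed_segment (proj_map (-c) a) (proj_map (-c) b)"
    if "a \<in> image_K" "b \<in> image_K" "y \<in> closed_segment a b" for a b y
    using proj_map_closed_segment inner_neg_center_less that by blast
qed (auto intro: proj_map_mem_image_K proj_map_neg_mem_K)

lemma exists_cut:
  "\<exists>Q H. full_polytope Q \<and> num_facets Q = card I - 1 \<and> closed_halfspace H \<and>
         comb_equiv (Q \<inter> H) K"
proof (intro exI conjI)
  have "finite (I - {F})" using finite_I by simp
  have origin: "\<forall>i\<in>I - {F}. w i \<bullet> 0 < 1" by simp
  show "num_facets cut_Q = card I - 1"
    using card_facets_halfspace_Inter[OF \<open>finite (I - {F})\<close> origin irredundant_cut_Q] F by simp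
  show "full_polytope cut_Q"
    using polyhedron_halfspace_Inter[OF \<open>finite (I - {F})\<close>] bounded_cut_Q
      interior_halfspace_Inter[OF \<open>finite (I - {F})\<close> origin]
    by (auto simp: full_polytope_def polytope_eq_bounded_polyhedron)
  show "closed_halfspace cut_H"
    unfolding closed_halfspace_def using normal_F_nonzero by blast
  have "cut_Q \<inter> cut_H = image_K" using F by (auto simp: halfspace_Inter_def)
  then show "comb_equiv (cut_Q \<inter> cut_H) K" using comb_equiv_image_K by simp
qed

end

theorem mainTheorem1:
  fixes P :: "'a::euclidean_space set" and n :: nat
  assumes "full_polytope P" and "simple_polytope P"
    and "num_facets P = n" and "n > DIM('a) + 1"
  shows "\<exists>Q H. full_polytope Q \<and> num_facets Q = n - 1 \<and> closed_halfspace H \<and>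
               comb_equiv (Q \<inter> H) P"
proof -
  obtain p u and I :: "'a set set" where "finite I" and card_I: "card I = num_facets P"
    and P: "P = (+) p ` halfspace_Inter u (\<lambda>_. 1) I"
    and irredundant: "irredundant_system u (\<lambda>_. 1) I"
    and bounded: "bounded (halfspace_Inter u (\<lambda>_. 1) I)"
    by (rule full_polytope_centred_form[OF assms(1)])
  have "DIM('a) + 2 \<le> card I" using card_I assms(3,4) by simp
  then obtain F c e where "F \<in> I" "0 < e" "ball c e \<subseteq> convex hull (u ` (I - {F}))"
    by (rule obtain_ball_in_hull_without_one[OF bounded])
  then interpret polar_cut u I F c e
    using \<open>finite I\<close> bounded irredundant by unfold_locales
  obtain Q H where "full_polytope Q" "num_facets Q = card I - 1" "closed_halfspace H"
    and "comb_equiv (Q \<inter> H) K"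
    using exists_cut by blast
  moreover have "comb_equiv K P" unfolding P by (rule comb_equiv_translation)
  ultimately show ?thesis using card_I assms(3) comb_equiv_trans by metis
qed

end
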